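(* Let $\mathbf{A}\in\mathbb{R}^{M\times N}$, $M=m\prod_{j=1}^L\ell_j$, $N=n\prod_{j=1}^Lq_j$, have the multilevel block structure \[\mathbf{A}=\sum_{i_1=1}^{p_1}\cdots\sum_{i_L=1}^{p_L}\mathbf{E}^{(1)}_{i_1}\otimes\cdots\otimes\mathbf{E}^{(L)}_{i_L}\otimes\sqrt{\eta^{(1)}_{i_1}\cdots\eta^{(L)}_{i_L}}\,\mathbf{A}^{(i_1,\dots,i_L)}\] described in the context, and let $\mathcal{T}_{\mathcal{E}}[\mathbf{A}]$ and $\mathcal{M}_{\mathcal{E}}$ be as defined there. Let $\widehat{\mathcal{T}}_{\mathcal{E}}[\mathbf{A}]\in\mathbb{R}^{m\times p_1\times\cdots\times p_L\times n}$ be any tensor (an approximation of $\mathcal{T}_{\mathcal{E}}[\mathbf{A}]$). Then \[\big\|\mathbf{A}-\mathcal{M}_{\mathcal{E}}[\widehat{\mathcal{T}}_{\mathcal{E}}[\mathbf{A}]]\big\|_F=\big\|\mathcal{T}_{\mathcal{E}}[\mathbf{A}]-\widehat{\mathcal{T}}_{\mathcal{E}}[\mathbf{A}]\big\|_F.\]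
   Context: For each level $j=1,\dots,L$ there are $p_j$ matrices $\mathbf{E}^{(j)}_1,\dots,\mathbf{E}^{(j)}_{p_j}\in\mathbb{R}^{\ell_j\times q_j}$ ($1\le p_j\le\ell_jq_j$), where $\mathbf{E}^{(j)}_k$ has entries in $\{0,1/\sqrt{\eta^{(j)}_k}\}$, $\eta^{(j)}_k\ge1$ is its number of nonzero entries, and the supports of $\mathbf{E}^{(j)}_k$ for distinct $k$ are disjoint (they record the positions of repeated blocks at level $j$). $\mathbf{A}^{(i_1,\dots,i_L)}\in\mathbb{R}^{m\times n}$ are the non-redundant blocks at the lowest level; $\mathcal{E}=(\mathcal{E}^{(1)},\dots,\mathcal{E}^{(L)})$ with $\mathcal{E}^{(j)}=(\mathbf{E}^{(j)}_1,\dots,\mathbf{E}^{(j)}_{p_j})$. The Kronecker product $\mathbf{B}\otimes\mathbf{C}$ has $(i,j)$ block $b_{ij}\mathbf{C}$. The tensor $\mathcal{T}_{\mathcal{E}}[\mathbf{A}]\in\mathbb{R}^{m\times p_1\times\cdots\times p_L\times n}$ has entries $(\mathcal{T}_{\mathcal{E}}[\mathbf{A}])_{a,i_1,\dots,i_L,b}=\sqrt{\eta^{(1)}_{i_1}\cdots\eta^{(L)}_{i_L}}\,(\mathbf{A}^{(i_1,\dots,i_L)})_{ab}$. For $\mathcal{X}\in\mathbb{R}^{m\times p_1\times\cdots\times p_L\times n}$, let $\mathrm{sq}(\mathcal{X}_{:,i_1,\dots,i_L,:})$ be the $m\times n$ matrix with $(a,b)$ entry $\mathcal{X}_{a,i_1,\dots,i_L,b}$,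 and $\mathcal{M}_{\mathcal{E}}[\mathcal{X}]=\sum_{i_1=1}^{p_1}\cdots\sum_{i_L=1}^{p_L}\mathbf{E}^{(1)}_{i_1}\otimes\cdots\otimes\mathbf{E}^{(L)}_{i_L}\otimes\mathrm{sq}(\mathcal{X}_{:,i_1,\dots,i_L,:})$. The Frobenius norm of a tensor is the square root of the sum of squares of its entries. *)

theory Defs
  imports Complex_Main
begin

text \<open>Matrices are functions nat => nat => real; only the entries inside the
declared dimensions matter. Indices are 0-based.\<close>

type_synonym mat = "nat \<Rightarrow> nat \<Rightarrow> real"

text \<open>Tensors in R^(m x p_1 x ... x p_L x n): the middle multi-index
(i_1,...,i_L) is a list of length L.\<close>
type_synonym tens = "nat \<Rightarrow> nat list \<Rightarrow> nat \<Rightarrow> real"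

definition frob :: "nat \<Rightarrow> nat \<Rightarrow> mat \<Rightarrow> real" where
  "frob M N X = sqrt (\<Sum>r<M. \<Sum>c<N. (X r c)^2)"

definition kron :: "nat \<Rightarrow> nat \<Rightarrow> mat \<Rightarrow> mat \<Rightarrow> mat" where
  "kron rC cC B C = (\<lambda>i j. B (i div rC) (j div cC) * C (i mod rC) (j mod cC))"

text \<open>B_1 (x) ... (x) B_k (x) X, each B_i given with its size (rows, cols), X of size m x n.\<close>
fun kron_list :: "(mat \<times> nat \<times> nat) list \<Rightarrow> nat \<Rightarrow> nat \<Rightarrow> mat \<Rightarrow> mat" where
  "kron_list [] m n X = X"
| "kron_list ((B, r, c) # bs) m n X =
     kron (m * prod_list (map (fst \<circ> snd) bs)) (n * prod_list (map (snd \<circ> snd) bs))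
          B (kron_list bs m n X)"

definition idxs :: "nat \<Rightarrow> (nat \<Rightarrow> nat) \<Rightarrow> nat list set" where
  "idxs L p = {is. length is = L \<and> (\<forall>j<L. is ! j < p j)}"

definition tfrob :: "nat \<Rightarrow> nat \<Rightarrow> nat \<Rightarrow> (nat \<Rightarrow> nat) \<Rightarrow> tens \<Rightarrow> real" where
  "tfrob m n L p X = sqrt (\<Sum>a<m. \<Sum>is\<in>idxs L p. \<Sum>b<n. (X a is b)^2)"

text \<open>E j k is the matrix E^{(j+1)}_{k+1} of size ell j x q j.\<close>
definition eta :: "(nat \<Rightarrow> nat) \<Rightarrow> (nat \<Rightarrow> nat) \<Rightarrow> (nat \<Rightarrow> nat \<Rightarrow> mat) \<Rightarrow> nat \<Rightarrow> nat \<Rightarrow> nat" where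
  "eta ell q E j k = card {(r, c). r < ell j \<and> c < q j \<and> E j k r c \<noteq> 0}"

definition kron_factors :: "nat \<Rightarrow> (nat \<Rightarrow> nat) \<Rightarrow> (nat \<Rightarrow> nat) \<Rightarrow> (nat \<Rightarrow> nat \<Rightarrow> mat)
    \<Rightarrow> nat list \<Rightarrow> (mat \<times> nat \<times> nat) list" where
  "kron_factors L ell q E is = map (\<lambda>j. (E j (is ! j), ell j, q j)) [0..<L]"

definition ME :: "nat \<Rightarrow> nat \<Rightarrow> nat \<Rightarrow> (nat \<Rightarrow> nat) \<Rightarrow> (nat \<Rightarrow> nat) \<Rightarrow> (nat \<Rightarrow> nat)
    \<Rightarrow> (nat \<Rightarrow> nat \<Rightarrow> mat) \<Rightarrow> tens \<Rightarrow> mat" where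
  "ME m n L ell q p E X = (\<lambda>r c. \<Sum>is\<in>idxs L p.
      kron_list (kron_factors L ell q E is) m n (\<lambda>a b. X a is b) r c)"

definition TE :: "(nat \<Rightarrow> nat) \<Rightarrow> (nat \<Rightarrow> nat) \<Rightarrow> nat \<Rightarrow> (nat \<Rightarrow> nat \<Rightarrow> mat)
    \<Rightarrow> (nat list \<Rightarrow> mat) \<Rightarrow> tens" where
  "TE ell q L E Ablk = (\<lambda>a is b.
      sqrt (\<Prod>j<L. real (eta ell q E j (is ! j))) * Ablk is a b)"

definition valid_E :: "nat \<Rightarrow> (nat \<Rightarrow> nat) \<Rightarrow> (nat \<Rightarrow> nat) \<Rightarrow> (nat \<Rightarrow> nat) \<Rightarrow> (nat \<Rightarrow> nat \<Rightarrow> mat) \<Rightarrow> bool" where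
  "valid_E L ell q p E \<longleftrightarrow>
     (\<forall>j<L. 1 \<le> p j \<and> p j \<le> ell j * q j) \<and>
     (\<forall>j<L. \<forall>k<p j. eta ell q E j k \<ge> 1) \<and>
     (\<forall>j<L. \<forall>k<p j. \<forall>r<ell j. \<forall>c<q j.
        E j k r c = 0 \<or> E j k r c = 1 / sqrt (real (eta ell q E j k))) \<and>
     (\<forall>j<L. \<forall>k1<p j. \<forall>k2<p j. k1 \<noteq> k2 \<longrightarrow>
        (\<forall>r<ell j. \<forall>c<q j. E j k1 r c = 0 \<or> E j k2 r c = 0))"

end

theory Submission
  imports Defs
begin

text \<open>Since \<open>A = M_E[T_E[A]]\<close> and \<open>M_E\<close> is linear, it suffices to show that \<open>M_E\<close> is an
isometry for the Frobenius norms. Splitting off the first level, \<open>M_E[X] = \<Sum>\<^sub>k E_k \<otimes> Z_k\<close>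
with \<open>Z_k\<close> the operator of the remaining levels applied to the slice \<open>k\<close> of \<open>X\<close>. The summands
have pairwise disjoint supports because the \<open>E_k\<close> do, so their squared norms add; the squared
norm of a Kronecker product is the product of the squared norms; and \<open>\<parallel>E_k\<parallel>_F = 1\<close> because
its \<open>\<eta>_k\<close> nonzero entries all equal \<open>1/\<surd>\<eta>_k\<close>.\<close>

definition frob_sq :: "nat \<Rightarrow> nat \<Rightarrow> mat \<Rightarrow> real" where
  "frob_sq M N X = (\<Sum>r<M. \<Sum>c<N. (X r c)^2)"

lemma frob_eq_sqrt_frob_sq: "frob M N X = sqrt (frob_sq M N X)"
  by (simp add: frob_def frob_sq_def)

lemma frob_sq_cong:
  "(\<And>r c. r < M \<Longrightarrow> c < N \<Longrightarrow> X r c = Y r c) \<Longrightarrow> frob_sq M N X = frob_sq M N Y"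
  unfolding frob_sq_def by (intro sum.cong) auto

lemma tfrob_eq_sqrt_sum_frob_sq:
  "tfrob m n L p X = sqrt (\<Sum>is\<in>idxs L p. frob_sq m n (\<lambda>a b. X a is b))"
  unfolding tfrob_def frob_sq_def by (subst sum.swap) simp

lemma sum_lessThan_mult_div_mod:
  fixes a R :: nat and f :: "nat \<Rightarrow> nat \<Rightarrow> 'a::comm_monoid_add"
  shows "(\<Sum>i<a * R. f (i div R) (i mod R)) = (\<Sum>x<a. \<Sum>u<R. f x u)"
proof -
  have div_mod_bound: "i mod R < R" if "i < a * R" for i
    using that by (metis mod_less_divisor mult_not_zero not_gr_zero not_less0)
  have "x * R + u < a * R" if "x < a" "u < R" for x u
  proof -
    have "x * R + u < Suc x * R" using that by simp
    also have "\<dots> \<le> a * R" using that by (intro mult_le_mono1) simp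
    finally show ?thesis .
  qed
  then have "(\<Sum>i<a * R. f (i div R) (i mod R)) = (\<Sum>(x, u)\<in>{..<a} \<times> {..<R}. f x u)"
    using div_mod_bound
    by (intro sum.reindex_bij_witness[where i = "\<lambda>(x, u). x * R + u" and j = "\<lambda>i. (i div R, i mod R)"])
      (auto simp: less_mult_imp_div_less)
  then show ?thesis
    by (simp add: sum.cartesian_product)
qed

lemma frob_sq_kron:
  "frob_sq (ell * R) (q * C) (kron R C B Z) = frob_sq ell q B * frob_sq R C Z"
proof -
  have "frob_sq (ell * R) (q * C) (kron R C B Z)
      = (\<Sum>x<ell. \<Sum>u<R. \<Sum>y<q. \<Sum>v<C. (B x y)^2 * (Z u v)^2)"
    unfolding frob_sq_def kron_def power_mult_distrib
    using sum_lessThan_mult_div_mod[where a = ell and R = R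
        and f = "\<lambda>x u. \<Sum>c<q * C. (B x (c div C))^2 * (Z u (c mod C))^2"]
      sum_lessThan_mult_div_mod[where a = q and R = C and f = "\<lambda>y v. (B _ y)^2 * (Z _ v)^2"]
    by simp
  also have "\<dots> = frob_sq ell q B * frob_sq R C Z"
    unfolding frob_sq_def by (simp add: sum_product)
  finally show ?thesis .
qed

lemma power2_sum_pairwise_zero_products:
  fixes a :: "'k \<Rightarrow> 'a::comm_ring_1"
  assumes "finite K" and "\<And>k l. k \<in> K \<Longrightarrow> l \<in> K \<Longrightarrow> k \<noteq> l \<Longrightarrow> a k * a l = 0"
  shows "(\<Sum>k\<in>K. a k)^2 = (\<Sum>k\<in>K. (a k)^2)"
proof -
  have "(\<Sum>k\<in>K. a k)^2 = (\<Sum>k\<in>K. \<Sum>l\<in>K. a k * a l)"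
    by (simp add: power2_eq_square sum_product)
  also have "\<dots> = (\<Sum>k\<in>K. \<Sum>l\<in>K. if k = l then a k * a l else 0)"
    using assms(2) by (intro sum.cong refl) auto
  also have "\<dots> = (\<Sum>k\<in>K. (a k)^2)"
    using assms(1) by (simp add: power2_eq_square)
  finally show ?thesis .
qed

lemma frob_sq_sum_disjoint_supports:
  assumes "finite K"
    and "\<And>k l r c. k \<in> K \<Longrightarrow> l \<in> K \<Longrightarrow> k \<noteq> l \<Longrightarrow> r < M \<Longrightarrow> c < N
           \<Longrightarrow> Y k r c = 0 \<or> Y l r c = 0"
  shows "frob_sq M N (\<lambda>r c. \<Sum>k\<in>K. Y k r c) = (\<Sum>k\<in>K. frob_sq M N (Y k))"
proof -
  have "frob_sq M N (\<lambda>r c. \<Sum>k\<in>K. Y k r c) = (\<Sum>r<M. \<Sum>c<N. \<Sum>k\<in>K. (Y k r c)^2)"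
    unfolding frob_sq_def using assms
    by (intro sum.cong refl power2_sum_pairwise_zero_products) fastforce+
  also have "\<dots> = (\<Sum>r<M. \<Sum>k\<in>K. \<Sum>c<N. (Y k r c)^2)"
    by (intro sum.cong refl sum.swap)
  also have "\<dots> = (\<Sum>k\<in>K. frob_sq M N (Y k))"
    unfolding frob_sq_def by (rule sum.swap)
  finally show ?thesis .
qed

definition support :: "nat \<Rightarrow> nat \<Rightarrow> mat \<Rightarrow> (nat \<times> nat) set" where
  "support M N X = {(r, c). r < M \<and> c < N \<and> X r c \<noteq> 0}"

lemma eta_eq_card_support: "eta ell q E j k = card (support (ell j) (q j) (E j k))"
  by (simp add: eta_def support_def)

lemma frob_sq_normalized_support:
  assumes "support M N X \<noteq> {}"
    and "\<And>r c. r < M \<Longrightarrow> c < N \<Longrightarrow> X r c = 0 \<or> X r c = 1 / sqrt (card (support M N X))"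
  shows "frob_sq M N X = 1"
proof -
  let ?S = "support M N X"
  have "finite ?S"
    unfolding support_def by (rule finite_subset[of _ "{..<M} \<times> {..<N}"]) auto
  have "frob_sq M N X = (\<Sum>(r, c)\<in>{..<M} \<times> {..<N}. (X r c)^2)"
    by (simp add: frob_sq_def sum.cartesian_product)
  also have "\<dots> = (\<Sum>(r, c)\<in>?S. (X r c)^2)"
    unfolding support_def by (rule sum.mono_neutral_right) auto
  also have "\<dots> = (\<Sum>_\<in>?S. 1 / card ?S)"
    using assms(2) by (intro sum.cong refl) (force simp: support_def power_divide)
  also have "\<dots> = 1"
    using \<open>finite ?S\<close> assms(1) by simp
  finally show ?thesis .
qed

lemma idxs_0: "idxs 0 p = {[]}"
  unfolding idxs_def by auto

lemma idxs_Suc: "idxs (Suc L) p = (\<lambda>(k, is). k # is) ` ({..<p 0} \<times> idxs L (p \<circ> Suc))"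
proof (intro equalityI subsetI)
  fix xs assume "xs \<in> idxs (Suc L) p"
  then show "xs \<in> (\<lambda>(k, is). k # is) ` ({..<p 0} \<times> idxs L (p \<circ> Suc))"
    unfolding idxs_def by (cases xs) (auto simp: image_iff All_less_Suc2)
qed (auto simp: idxs_def All_less_Suc2)

lemma finite_idxs: "finite (idxs L p)"
  by (induction L arbitrary: p) (simp_all add: idxs_0 idxs_Suc)

lemma sum_idxs_Suc:
  "(\<Sum>is\<in>idxs (Suc L) p. g is) = (\<Sum>k<p 0. \<Sum>is\<in>idxs L (p \<circ> Suc). g (k # is))"
  unfolding idxs_Suc using finite_idxs
  by (subst sum.reindex) (auto simp: inj_on_def sum.cartesian_product case_prod_beta)

lemma kron_factors_Cons:
  "kron_factors (Suc L) ell q E (k # is) =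
     (E 0 k, ell 0, q 0) # kron_factors L (ell \<circ> Suc) (q \<circ> Suc) (E \<circ> Suc) is"
  unfolding kron_factors_def by (simp add: map_upt_Suc del: upt_Suc)

lemma prod_list_map_upt: "prod_list (map f [0..<L]) = (\<Prod>j<L. f j)"
  by (simp add: prod.distinct_set_conv_list[symmetric] atLeast0LessThan)

lemma ME_Suc:
  "ME m n (Suc L) ell q p E X =
     (\<lambda>r c. \<Sum>k<p 0. kron (m * (\<Prod>j<L. ell (Suc j))) (n * (\<Prod>j<L. q (Suc j))) (E 0 k)
        (ME m n L (ell \<circ> Suc) (q \<circ> Suc) (p \<circ> Suc) (E \<circ> Suc) (\<lambda>a is b. X a (k # is) b)) r c)"
  unfolding ME_def sum_idxs_Suc kron_factors_Cons
  by (simp add: kron_def sum_distrib_left kron_factors_def prod_list_map_upt)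

lemma kron_list_diff:
  "kron_list fs m n (\<lambda>a b. X a b - Y a b) r c = kron_list fs m n X r c - kron_list fs m n Y r c"
  by (induction fs arbitrary: r c) (auto simp: kron_def right_diff_distrib)

lemma ME_diff:
  "ME m n L ell q p E (\<lambda>a is b. X a is b - Y a is b) r c
     = ME m n L ell q p E X r c - ME m n L ell q p E Y r c"
  unfolding ME_def by (simp add: kron_list_diff sum_subtractf)

lemma frob_sq_ME:
  assumes "\<And>j k. j < L \<Longrightarrow> k < p j \<Longrightarrow> frob_sq (ell j) (q j) (E j k) = 1"
    and "\<And>j k l r c. j < L \<Longrightarrow> k < p j \<Longrightarrow> l < p j \<Longrightarrow> k \<noteq> l \<Longrightarrow> r < ell j \<Longrightarrow> c < q j
           \<Longrightarrow> E j k r c = 0 \<or> E j l r c = 0"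
  shows "frob_sq (m * (\<Prod>j<L. ell j)) (n * (\<Prod>j<L. q j)) (ME m n L ell q p E X)
       = (\<Sum>is\<in>idxs L p. frob_sq m n (\<lambda>a b. X a is b))"
  using assms
proof (induction L arbitrary: ell q p E X)
  case 0
  then show ?case by (simp add: idxs_0 ME_def kron_factors_def)
next
  case (Suc L)
  define R where "R = m * (\<Prod>j<L. ell (Suc j))"
  define C where "C = n * (\<Prod>j<L. q (Suc j))"
  define Z where
    "Z k = ME m n L (ell \<circ> Suc) (q \<circ> Suc) (p \<circ> Suc) (E \<circ> Suc) (\<lambda>a is b. X a (k # is) b)" for k
  have dims: "m * (\<Prod>j<Suc L. ell j) = ell 0 * R" "n * (\<Prod>j<Suc L. q j) = q 0 * C"
    unfolding R_def C_def prod.lessThan_Suc_shift by simp_all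
  have "frob_sq (ell 0 * R) (q 0 * C) (ME m n (Suc L) ell q p E X)
      = (\<Sum>k<p 0. frob_sq (ell 0 * R) (q 0 * C) (kron R C (E 0 k) (Z k)))"
    unfolding ME_Suc R_def[symmetric] C_def[symmetric] Z_def[symmetric]
  proof (rule frob_sq_sum_disjoint_supports)
    fix k l r c
    assume "k \<in> {..<p 0}" "l \<in> {..<p 0}" "k \<noteq> l" "r < ell 0 * R" "c < q 0 * C"
    then have "E 0 k (r div R) (c div C) = 0 \<or> E 0 l (r div R) (c div C) = 0"
      by (intro Suc.prems(2)) (auto simp: less_mult_imp_div_less)
    then show "kron R C (E 0 k) (Z k) r c = 0 \<or> kron R C (E 0 l) (Z l) r c = 0"
      by (auto simp: kron_def)
  qed simp
  also have "\<dots> = (\<Sum>k<p 0. frob_sq R C (Z k))"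
    by (simp add: frob_sq_kron Suc.prems(1)[of 0])
  also have "\<dots> = (\<Sum>k<p 0. \<Sum>is\<in>idxs L (p \<circ> Suc). frob_sq m n (\<lambda>a b. X a (k # is) b))"
  proof (intro sum.cong refl)
    fix k
    have "frob_sq (m * (\<Prod>j<L. (ell \<circ> Suc) j)) (n * (\<Prod>j<L. (q \<circ> Suc) j)) (Z k)
        = (\<Sum>is\<in>idxs L (p \<circ> Suc). frob_sq m n (\<lambda>a b. X a (k # is) b))"
      unfolding Z_def by (rule Suc.IH) (simp_all add: Suc.prems)
    then show "frob_sq R C (Z k) = (\<Sum>is\<in>idxs L (p \<circ> Suc). frob_sq m n (\<lambda>a b. X a (k # is) b))"
      by (simp add: R_def C_def)
  qed
  finally show ?case
    unfolding dims sum_idxs_Suc .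
qed

lemma valid_E_frob_sq_eq_1:
  assumes "valid_E L ell q p E" "j < L" "k < p j"
  shows "frob_sq (ell j) (q j) (E j k) = 1"
proof (rule frob_sq_normalized_support)
  have "card (support (ell j) (q j) (E j k)) \<ge> 1"
    using assms by (simp add: valid_E_def eta_eq_card_support)
  then show "support (ell j) (q j) (E j k) \<noteq> {}"
    by (metis card.empty not_one_le_zero)
  show "E j k r c = 0 \<or> E j k r c = 1 / sqrt (card (support (ell j) (q j) (E j k)))"
    if "r < ell j" "c < q j" for r c
    using assms that by (simp add: valid_E_def eta_eq_card_support)
qed

lemma valid_E_disjoint_supports:
  assumes "valid_E L ell q p E" "j < L" "k < p j" "l < p j" "k \<noteq> l" "r < ell j" "c < q j"
  shows "E j k r c = 0 \<or> E j l r c = 0"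
  using assms unfolding valid_E_def by blast

theorem lemma7p1:
  fixes m n L :: nat and ell q p :: "nat \<Rightarrow> nat"
    and E :: "nat \<Rightarrow> nat \<Rightarrow> mat" and Ablk :: "nat list \<Rightarrow> mat"
    and A :: mat and That :: tens
  assumes "valid_E L ell q p E"
    and "\<forall>r < m * (\<Prod>j<L. ell j). \<forall>c < n * (\<Prod>j<L. q j).
           A r c = (\<Sum>is\<in>idxs L p. kron_list (kron_factors L ell q E is) m n
              (\<lambda>a b. sqrt (\<Prod>j<L. real (eta ell q E j (is ! j))) * Ablk is a b) r c)"
  shows "frob (m * (\<Prod>j<L. ell j)) (n * (\<Prod>j<L. q j)) (\<lambda>r c. A r c - ME m n L ell q p E That r c)
       = tfrob m n L p (\<lambda>a is b. TE ell q L E Ablk a is b - That a is b)"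
proof -
  let ?M = "m * (\<Prod>j<L. ell j)" and ?N = "n * (\<Prod>j<L. q j)"
  let ?D = "\<lambda>a is b. TE ell q L E Ablk a is b - That a is b"
  have "A r c - ME m n L ell q p E That r c = ME m n L ell q p E ?D r c"
    if "r < ?M" "c < ?N" for r c
  proof -
    have "A r c = ME m n L ell q p E (TE ell q L E Ablk) r c"
      using assms(2) that by (simp add: ME_def TE_def)
    then show ?thesis
      by (simp add: ME_diff)
  qed
  then have "frob_sq ?M ?N (\<lambda>r c. A r c - ME m n L ell q p E That r c)
      = frob_sq ?M ?N (ME m n L ell q p E ?D)"
    by (rule frob_sq_cong)
  also have "\<dots> = (\<Sum>is\<in>idxs L p. frob_sq m n (\<lambda>a b. ?D a is b))"
    using assms(1) by (intro frob_sq_ME valid_E_frob_sq_eq_1 valid_E_disjoint_supports)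
  finally show ?thesis
    unfolding frob_eq_sqrt_frob_sq tfrob_eq_sqrt_sum_frob_sq by simp
qed

end
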